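(* Let $\mathbb{S}\subseteq\mathbb{R}$ be an interval, let $Q:\mathbb{S}\to\mathbb{R}$ be continuous and twice differentiable, and let $q(z)=Q'(z)$. For $\mathbf{z}\in\mathbb{S}^K$ set $p_k(\mathbf{z})=e^{Q(z_k)}/\sum_{j=1}^K e^{Q(z_j)}$, $k=1,\dots,K$, and for $\hat{\mathbf{s}},\mathbf{s}\in\mathbb{S}^K$ define $$\mathcal{L}_m(\hat{\mathbf{s}},\mathbf{s})=\log\Big\{\sum_{k=1}^K e^{Q(\hat s_k)}\Big\}-\log\Big\{\sum_{k=1}^K e^{Q(s_k)}\Big\}-\sum_{k=1}^K(\hat s_k-s_k)\,q(s_k)\,p_k(\mathbf{s}).$$ If $Q$ is convex on $\mathbb{S}$ (equivalently, $q$ is monotonically non-decreasing on $\mathbb{S}$), then for every $\mathbf{s}\in\mathbb{S}^K$ the map $\hat{\mathbf{s}}\mapsto\mathcal{L}_m(\hat{\mathbf{s}},\mathbf{s})$ is convex on $\mathbb{S}^K$; it is the multi-class matching loss (Bregman divergence) of the primitive $H(\mathbf{z})=\log\sum_k e^{Q(z_k)}$, whose gradient components are $q(z_k)p_k(\mathbf{z})$.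
   Context: $p_k$ is the composite Softmax and $q$ the scaling function. The multi-class matching loss with primitive $H$ is $H(\hat{\mathbf{s}})-H(\mathbf{s})-(\hat{\mathbf{s}}-\mathbf{s})\cdot\nabla H(\mathbf{s})$. *)

theory Defs
  imports "HOL-Analysis.Analysis"
begin

text \<open>Vectors in S^K are modelled as elements of real^'k for a finite index type 'k (K = CARD('k)).\<close>

definition cube :: "real set \<Rightarrow> (real^'k) set" where
  "cube S = {z. \<forall>k. z $ k \<in> S}"

definition softmax :: "(real \<Rightarrow> real) \<Rightarrow> real^'k \<Rightarrow> 'k \<Rightarrow> real" where
  "softmax Q z k = exp (Q (z $ k)) / (\<Sum>j\<in>UNIV. exp (Q (z $ j)))"

definition primH :: "(real \<Rightarrow> real) \<Rightarrow> real^'k \<Rightarrow> real" where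
  "primH Q z = ln (\<Sum>k\<in>UNIV. exp (Q (z $ k)))"

definition Lm :: "(real \<Rightarrow> real) \<Rightarrow> (real \<Rightarrow> real) \<Rightarrow> real^'k \<Rightarrow> real^'k \<Rightarrow> real" where
  "Lm Q q shat s = ln (\<Sum>k\<in>UNIV. exp (Q (shat $ k))) - ln (\<Sum>k\<in>UNIV. exp (Q (s $ k)))
      - (\<Sum>k\<in>UNIV. (shat $ k - s $ k) * q (s $ k) * softmax Q s k)"

end

theory Submission
  imports Defs
begin

text \<open>
  The primitive is \<open>H = lse \<circ> Q\<close>, with \<open>Q\<close> applied componentwise and
  \<open>lse a = ln (\<Sum>\<^sub>k exp a\<^sub>k)\<close>. Log-sum-exp is convex (after normalising by
  \<open>exp (lse a)\<close> this is the convexity of \<open>exp\<close>, summed over the components) and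
  increasing in every coordinate, so \<open>H\<close> is convex as soon as \<open>Q\<close> is. The loss
  \<open>L\<^sub>m(\<cdot>, s)\<close> differs from \<open>H\<close> by an affine function, hence is convex too; its
  gradient formula is the chain rule.
\<close>

definition ln_sum_exp :: "real^'k \<Rightarrow> real" where
  "ln_sum_exp a = ln (\<Sum>k\<in>UNIV. exp (a $ k))"

lemma sum_exp_pos: "(\<Sum>k\<in>(UNIV::'k::finite set). exp (f k)) > (0::real)"
  by (intro sum_pos) auto

lemma convex_on_ln_sum_exp: "convex_on UNIV ln_sum_exp"
proof (rule convex_onI)
  fix t :: real and a b :: "real^'k"
  assume t: "0 < t" "t < 1"
  define A where "A = (\<Sum>k\<in>UNIV. exp (a $ k))"
  define B where "B = (\<Sum>k\<in>UNIV. exp (b $ k))"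
  define c where "c = (1 - t) * ln A + t * ln B"
  have A: "A > 0" and B: "B > 0"
    unfolding A_def B_def by (fact sum_exp_pos)+
  have term_le: "exp (((1 - t) *\<^sub>R a + t *\<^sub>R b) $ k) / exp c
      \<le> (1 - t) * (exp (a $ k) / A) + t * (exp (b $ k) / B)" for k
  proof -
    have "exp (((1 - t) *\<^sub>R a + t *\<^sub>R b) $ k) / exp c
        = exp ((1 - t) * (a $ k - ln A) + t * (b $ k - ln B))"
      by (simp add: c_def exp_diff[symmetric] algebra_simps)
    also have "\<dots> \<le> (1 - t) * exp (a $ k - ln A) + t * exp (b $ k - ln B)"
      using convex_onD[OF exp_convex, of t "a $ k - ln A" "b $ k - ln B"] t by simp
    also have "\<dots> = (1 - t) * (exp (a $ k) / A) + t * (exp (b $ k) / B)"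
      using A B by (simp add: exp_diff)
    finally show ?thesis .
  qed
  have "(\<Sum>k\<in>UNIV. exp (((1 - t) *\<^sub>R a + t *\<^sub>R b) $ k)) / exp c
      = (\<Sum>k\<in>UNIV. exp (((1 - t) *\<^sub>R a + t *\<^sub>R b) $ k) / exp c)"
    by (simp add: sum_divide_distrib)
  also have "\<dots> \<le> (\<Sum>k\<in>UNIV. (1 - t) * (exp (a $ k) / A) + t * (exp (b $ k) / B))"
    by (intro sum_mono term_le)
  also have "\<dots> = (1 - t) * (A / A) + t * (B / B)"
    by (simp add: sum.distrib flip: sum_distrib_left sum_divide_distrib add: A_def B_def)
  also have "\<dots> = 1"
    using A B by simp
  finally have "(\<Sum>k\<in>UNIV. exp (((1 - t) *\<^sub>R a + t *\<^sub>R b) $ k)) \<le> exp c"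
    by simp
  then have "ln_sum_exp ((1 - t) *\<^sub>R a + t *\<^sub>R b) \<le> ln (exp c)"
    unfolding ln_sum_exp_def using sum_exp_pos by (subst ln_le_cancel_iff) auto
  then show "ln_sum_exp ((1 - t) *\<^sub>R a + t *\<^sub>R b) \<le> (1 - t) * ln_sum_exp a + t * ln_sum_exp b"
    by (simp add: c_def A_def B_def ln_sum_exp_def)
qed simp

lemma ln_sum_exp_mono:
  assumes "\<And>k. a $ k \<le> b $ k"
  shows "ln_sum_exp a \<le> ln_sum_exp b"
  unfolding ln_sum_exp_def using assms sum_exp_pos
  by (subst ln_le_cancel_iff) (auto intro: sum_mono)

lemma convex_cube: "convex S \<Longrightarrow> convex (cube S)"
  unfolding convex_def cube_def by auto

lemma convex_on_ln_sum_exp_componentwise: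
  assumes "convex_on S f"
  shows "convex_on (cube S) (\<lambda>z. ln_sum_exp (\<chi> k. f (z $ k)))"
proof (rule convex_onI)
  fix t :: real and x y :: "real^'k"
  assume t: "0 < t" "t < 1" and xy: "x \<in> cube S" "y \<in> cube S"
  have "ln_sum_exp (\<chi> k. f (((1 - t) *\<^sub>R x + t *\<^sub>R y) $ k))
      \<le> ln_sum_exp ((1 - t) *\<^sub>R (\<chi> k. f (x $ k)) + t *\<^sub>R (\<chi> k. f (y $ k)))"
    using convex_onD[OF assms] t xy by (intro ln_sum_exp_mono) (simp add: cube_def)
  also have "\<dots> \<le> (1 - t) * ln_sum_exp (\<chi> k. f (x $ k)) + t * ln_sum_exp (\<chi> k. f (y $ k))"
    using t by (intro convex_onD[OF convex_on_ln_sum_exp]) auto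
  finally show "ln_sum_exp (\<chi> k. f (((1 - t) *\<^sub>R x + t *\<^sub>R y) $ k))
      \<le> (1 - t) * ln_sum_exp (\<chi> k. f (x $ k)) + t * ln_sum_exp (\<chi> k. f (y $ k))" .
qed (use assms convex_cube convex_on_imp_convex in blast)

lemma primH_eq_ln_sum_exp: "primH Q z = ln_sum_exp (\<chi> k. Q (z $ k))"
  by (simp add: primH_def ln_sum_exp_def)

lemma convex_on_primH: "convex_on S Q \<Longrightarrow> convex_on (cube S) (primH Q)"
  unfolding primH_eq_ln_sum_exp by (rule convex_on_ln_sum_exp_componentwise)

lemma concave_on_affine_sum:
  assumes "convex S"
  shows "concave_on S (\<lambda>z::real^'k. b + (\<Sum>k\<in>UNIV. (z $ k - s $ k) * c k))"
  unfolding concave_on_iff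
proof (intro conjI ballI allI impI assms)
  fix x y :: "real^'k" and u v :: real
  assume "u + v = 1"
  then have v: "v = 1 - u"
    by simp
  have "(\<Sum>k\<in>UNIV. ((u *\<^sub>R x + v *\<^sub>R y) $ k - s $ k) * c k)
      = (\<Sum>k\<in>UNIV. u * ((x $ k - s $ k) * c k) + v * ((y $ k - s $ k) * c k))"
    unfolding v by (intro sum.cong) (auto simp: algebra_simps)
  also have "\<dots> = u * (\<Sum>k\<in>UNIV. (x $ k - s $ k) * c k) + v * (\<Sum>k\<in>UNIV. (y $ k - s $ k) * c k)"
    by (simp add: sum.distrib sum_distrib_left)
  finally show "u * (b + (\<Sum>k\<in>UNIV. (x $ k - s $ k) * c k)) + v * (b + (\<Sum>k\<in>UNIV. (y $ k - s $ k) * c k))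
      \<le> b + (\<Sum>k\<in>UNIV. ((u *\<^sub>R x + v *\<^sub>R y) $ k - s $ k) * c k)"
    unfolding v by (simp add: algebra_simps)
qed

lemma Lm_eq_primH:
  "Lm Q q shat s = primH Q shat - primH Q s
     - (\<Sum>k\<in>UNIV. (shat $ k - s $ k) * (q (s $ k) * softmax Q s k))"
  unfolding Lm_def primH_def by (simp add: mult.assoc)

lemma convex_on_Lm:
  assumes "convex_on S Q"
  shows "convex_on (cube S) (\<lambda>shat. Lm Q q shat s)"
proof -
  have "convex_on (cube S) (\<lambda>shat. primH Q shat
      - (primH Q s + (\<Sum>k\<in>UNIV. (shat $ k - s $ k) * (q (s $ k) * softmax Q s k))))"
    using assms convex_on_imp_convex[OF assms]
    by (intro convex_on_diff convex_on_primH concave_on_affine_sum convex_cube)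
  then show ?thesis
    by (simp add: Lm_eq_primH diff_diff_eq)
qed

lemma has_derivative_primH:
  assumes Q_deriv: "\<And>x. x \<in> S \<Longrightarrow> (Q has_real_derivative q x) (at x within S)"
    and z: "z \<in> cube S"
  shows "(primH Q has_derivative (\<lambda>h. \<Sum>k\<in>UNIV. h $ k * (q (z $ k) * softmax Q z k)))
      (at z within cube S)"
proof -
  define E where "E = (\<Sum>k\<in>UNIV. exp (Q (z $ k)))"
  have component: "((\<lambda>w. Q (w $ k)) has_derivative (\<lambda>h. q (z $ k) * h $ k)) (at z within cube S)" for k
  proof -
    have "((\<lambda>w. Q (w $ k)) has_derivative (\<lambda>h. (\<lambda>u. q (z $ k) * u) (h $ k))) (at z within cube S)"
      by (rule has_derivative_in_compose2[where g = Q and t = S and g' = "\<lambda>x u. q x * u"])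
        (use Q_deriv z in \<open>auto simp: has_field_derivative_def cube_def
          intro: bounded_linear.has_derivative[OF bounded_linear_vec_nth] has_derivative_ident\<close>)
    then show ?thesis
      by simp
  qed
  have "((\<lambda>w. \<Sum>k\<in>UNIV. exp (Q (w $ k))) has_derivative
        (\<lambda>h. \<Sum>k\<in>UNIV. exp (Q (z $ k)) * (q (z $ k) * h $ k))) (at z within cube S)"
    using has_derivative_exp[OF component] by (intro has_derivative_sum) (simp add: mult.commute)
  from has_derivative_ln[OF sum_exp_pos this]
  have "(primH Q has_derivative (\<lambda>h. (\<Sum>k\<in>UNIV. exp (Q (z $ k)) * (q (z $ k) * h $ k)) / E))
      (at z within cube S)"
    unfolding primH_def[abs_def] E_def by (simp add: divide_inverse mult.commute)
  moreover have "(\<lambda>h. (\<Sum>k\<in>UNIV. exp (Q (z $ k)) * (q (z $ k) * h $ k)) / E)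
      = (\<lambda>h. \<Sum>k\<in>UNIV. h $ k * (q (z $ k) * softmax Q z k))"
    by (auto simp: softmax_def E_def[symmetric] sum_divide_distrib intro!: sum.cong)
  ultimately show ?thesis
    by simp
qed

theorem theorem4:
  fixes S :: "real set" and Q q :: "real \<Rightarrow> real"
  assumes interval: "is_interval S"
    and Q_cont: "continuous_on S Q"
    and Q_deriv: "\<And>x. x \<in> S \<Longrightarrow> (Q has_real_derivative q x) (at x within S)"
    and q_deriv: "\<exists>q'. \<forall>x\<in>S. (q has_real_derivative q' x) (at x within S)"
    and Q_convex: "convex_on S Q"
  shows "(\<forall>s \<in> cube S. convex_on (cube S) (\<lambda>shat. Lm Q q shat (s :: real^'k)))
    \<and> (\<forall>shat \<in> cube S. \<forall>s \<in> cube S.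
           Lm Q q shat (s :: real^'k) = primH Q shat - primH Q s
             - (\<Sum>k\<in>UNIV. (shat $ k - s $ k) * (q (s $ k) * softmax Q s k)))
    \<and> (\<forall>z \<in> cube S. (primH Q has_derivative
           (\<lambda>h. \<Sum>k\<in>UNIV. h $ k * (q (z $ k) * softmax Q (z :: real^'k) k))) (at z within cube S))"
  using convex_on_Lm[OF Q_convex] Lm_eq_primH has_derivative_primH[OF Q_deriv]
  by blast

end
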